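(* Let $\mathbf{k}_1,\dots,\mathbf{k}_N \in \mathbb{R}^d$ (anchor keys), let $\delta:\mathbb{R}^d\to\mathbb{R}^d$ (the drift function), let $\mathbf{z}\in\mathbb{R}^d$ (a query), and let $\tau>0$, $\beta = 1/\tau$. Define the attention weights $p_i = \exp(\beta\mathbf{k}_i^\top\mathbf{z})/\sum_{j=1}^N\exp(\beta\mathbf{k}_j^\top\mathbf{z})$ and the estimate $\hat{\boldsymbol{\delta}}(\mathbf{z}) = \sum_{i=1}^N p_i\,\delta(\mathbf{k}_i)$. Assume there is a constant $L\ge 0$ such that $\|\delta(\mathbf{k}_i)-\delta(\mathbf{z})\| \le L\|\mathbf{k}_i-\mathbf{z}\|$ for all $i=1,\dots,N$. Then $$\|\hat{\boldsymbol{\delta}}(\mathbf{z}) - \delta(\mathbf{z})\| \le L\sum_{i=1}^N p_i\|\mathbf{k}_i-\mathbf{z}\|.$$ Furthermore, if $\|\mathbf{k}_i\| = \|\mathbf{z}\| = 1$ for all $i$, then $$\|\hat{\boldsymbol{\delta}}(\mathbf{z}) - \delta(\mathbf{z})\| \le L\Big(\min_i\|\mathbf{k}_i-\mathbf{z}\| + \sqrt{2\tau\log N}\Big).$$ Moreover, if the attention is restricted to the set $S$ of the $k$ anchors with the largest scores $\mathbf{k}_i^\top\mathbf{z}$ (with the softmax weights renormalized over $S$ and $\hat{\boldsymbol{\delta}}(\mathbf{z}) = \sum_{i\in S}p_i\delta(\mathbf{k}_i)$), then under the same normalization the last bound holds with $N$ replaced by $k$.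
   Context: Norms are Euclidean ($\ell_2$). The quantity $\hat{\boldsymbol{\delta}}(\mathbf{z})$ is the drift estimate of a softmax (dot-product) attention retrieval over anchor keys $\mathbf{k}_i$ whose associated values are the drifts $\delta(\mathbf{k}_i)$; $\tau$ is the softmax temperature. *)

theory Defs
  imports "HOL-Analysis.Analysis"
begin

definition attn_weight :: "real \<Rightarrow> (nat \<Rightarrow> real^'d) \<Rightarrow> nat set \<Rightarrow> real^'d \<Rightarrow> nat \<Rightarrow> real" where
  "attn_weight \<beta> K I z i = exp (\<beta> * (K i \<bullet> z)) / (\<Sum>j\<in>I. exp (\<beta> * (K j \<bullet> z)))"

definition drift_est :: "real \<Rightarrow> (nat \<Rightarrow> real^'d) \<Rightarrow> nat set \<Rightarrow> (real^'d \<Rightarrow> real^'d) \<Rightarrow> real^'d \<Rightarrow> real^'d" where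
  "drift_est \<beta> K I \<delta> z = (\<Sum>i\<in>I. attn_weight \<beta> K I z i *\<^sub>R \<delta> (K i))"

end

theory Submission
  imports Defs
begin

text \<open>The error of the attention estimate is a convex combination of the errors
  \<open>\<delta>(k\<^sub>i) - \<delta>(z)\<close>, so the Lipschitz bound gives the first inequality. For unit
  vectors \<open>\<parallel>k\<^sub>i - z\<parallel>\<^sup>2 = 2 - 2 k\<^sub>i\<cdot>z\<close>, so the mean squared distance under the softmax
  weights exceeds \<open>\<parallel>k\<^sub>m - z\<parallel>\<^sup>2\<close> by twice the mean score gap to any anchor \<open>k\<^sub>m\<close>; that
  gap is at most \<open>\<tau>\<close> times the entropy of the weights, hence at most \<open>\<tau> log n\<close>.
  Jensen's inequality and \<open>\<surd>(a + b) \<le> \<surd>a + \<surd>b\<close> then give the second bound. For the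
  top-\<open>k\<close> set, a highest-scoring anchor is also a nearest one, so it lies in the set.\<close>

lemma attn_weight_nonneg: "attn_weight \<beta> K I z i \<ge> 0"
  unfolding attn_weight_def by (auto intro!: divide_nonneg_nonneg sum_nonneg)

lemma sum_attn_weight:
  assumes "finite I" "I \<noteq> {}"
  shows "(\<Sum>i\<in>I. attn_weight \<beta> K I z i) = 1"
proof -
  have "(\<Sum>j\<in>I. exp (\<beta> * (K j \<bullet> z))) > 0"
    using assms by (intro sum_pos) auto
  then show ?thesis unfolding attn_weight_def by (simp add: sum_divide_distrib[symmetric])
qed

lemma norm_convex_comb_diff_le:
  fixes v :: "'a \<Rightarrow> 'b::real_normed_vector"
  assumes "sum p I = 1" "\<And>i. i \<in> I \<Longrightarrow> p i \<ge> 0"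
  shows "norm ((\<Sum>i\<in>I. p i *\<^sub>R v i) - w) \<le> (\<Sum>i\<in>I. p i * norm (v i - w))"
proof -
  have "(\<Sum>i\<in>I. p i *\<^sub>R v i) - w = (\<Sum>i\<in>I. p i *\<^sub>R v i) - (\<Sum>i\<in>I. p i) *\<^sub>R w"
    using assms(1) by simp
  also have "\<dots> = (\<Sum>i\<in>I. p i *\<^sub>R (v i - w))"
    by (simp add: scaleR_sum_left sum_subtractf scaleR_diff_right)
  finally have "norm ((\<Sum>i\<in>I. p i *\<^sub>R v i) - w) = norm (\<Sum>i\<in>I. p i *\<^sub>R (v i - w))"
    by simp
  also have "\<dots> \<le> (\<Sum>i\<in>I. norm (p i *\<^sub>R (v i - w)))"
    by (rule norm_sum)
  also have "\<dots> = (\<Sum>i\<in>I. p i * norm (v i - w))"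
    using assms(2) by (intro sum.cong) auto
  finally show ?thesis .
qed

lemma drift_est_error_le:
  assumes "finite I" "I \<noteq> {}"
    and lip: "\<And>i. i \<in> I \<Longrightarrow> norm (\<delta> (K i) - \<delta> z) \<le> L * norm (K i - z)"
  shows "norm (drift_est \<beta> K I \<delta> z - \<delta> z)
           \<le> L * (\<Sum>i\<in>I. attn_weight \<beta> K I z i * norm (K i - z))"
proof -
  let ?p = "attn_weight \<beta> K I z"
  have "norm (drift_est \<beta> K I \<delta> z - \<delta> z) \<le> (\<Sum>i\<in>I. ?p i * norm (\<delta> (K i) - \<delta> z))"
    unfolding drift_est_def
    by (rule norm_convex_comb_diff_le)
      (simp_all add: sum_attn_weight[OF assms(1,2)] attn_weight_nonneg)
  also have "\<dots> \<le> (\<Sum>i\<in>I. ?p i * (L * norm (K i - z)))"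
    using lip by (intro sum_mono mult_left_mono) (simp_all add: attn_weight_nonneg)
  also have "\<dots> = L * (\<Sum>i\<in>I. ?p i * norm (K i - z))"
    by (simp add: sum_distrib_left algebra_simps)
  finally show ?thesis .
qed

lemma entropy_le_ln_card:
  fixes p :: "'a \<Rightarrow> real"
  assumes "finite I" "sum p I = 1" "\<And>i. i \<in> I \<Longrightarrow> p i > 0"
  shows "(\<Sum>i\<in>I. p i * ln (1 / p i)) \<le> ln (card I)"
proof -
  have "I \<noteq> {}" using assms(2) by auto
  then have "(\<Sum>i\<in>I. p i * ln (1 / p i)) \<le> ln (\<Sum>i\<in>I. p i *\<^sub>R (1 / p i))"
    using assms by (intro concave_on_sum[OF _ _ ln_concave]) (auto intro: less_imp_le)
  also have "(\<Sum>i\<in>I. p i *\<^sub>R (1 / p i)) = (\<Sum>i\<in>I. 1)"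
    using assms(3) by (intro sum.cong) (auto simp: less_imp_neq[symmetric])
  finally show ?thesis
    by simp
qed

lemma softmax_gap_le_ln_card:
  fixes a :: "'a \<Rightarrow> real"
  assumes "finite I" "m \<in> I"
  shows "(\<Sum>i\<in>I. exp (a i) / (\<Sum>j\<in>I. exp (a j)) * (a m - a i)) \<le> ln (card I)"
proof -
  define Z where "Z = (\<Sum>j\<in>I. exp (a j))"
  define p where "p i = exp (a i) / Z" for i
  have "exp (a m) \<le> Z"
    unfolding Z_def using assms by (intro member_le_sum) auto
  then have am: "a m \<le> ln Z"
    by (metis exp_gt_zero ln_exp ln_le_cancel_iff order_less_le_trans)
  have Z: "Z > 0"
    unfolding Z_def using assms by (intro sum_pos) auto
  have "(\<Sum>i\<in>I. p i * (a m - a i)) \<le> (\<Sum>i\<in>I. p i * ln (1 / p i))"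
  proof (intro sum_mono mult_left_mono)
    fix i
    show "a m - a i \<le> ln (1 / p i)"
      using am Z by (simp add: p_def ln_div)
    show "0 \<le> p i"
      using Z by (simp add: p_def)
  qed
  also have "\<dots> \<le> ln (card I)"
    using assms Z by (intro entropy_le_ln_card) (auto simp: p_def Z_def sum_divide_distrib[symmetric])
  finally show ?thesis
    by (simp add: p_def Z_def)
qed

lemma attn_score_gap_le:
  assumes "finite I" "m \<in> I" "\<tau> > 0" "\<beta> = 1 / \<tau>"
  shows "(\<Sum>i\<in>I. attn_weight \<beta> K I z i * (K m \<bullet> z - K i \<bullet> z)) \<le> \<tau> * ln (card I)"
proof -
  let ?gap = "\<Sum>i\<in>I. attn_weight \<beta> K I z i * (K m \<bullet> z - K i \<bullet> z)"
  have "\<beta> * ?gap \<le> ln (card I)"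
    using softmax_gap_le_ln_card[OF assms(1,2), of "\<lambda>i. \<beta> * (K i \<bullet> z)"]
    by (simp add: attn_weight_def sum_distrib_left algebra_simps)
  then have "\<tau> * (\<beta> * ?gap) \<le> \<tau> * ln (card I)"
    using assms(3) by (intro mult_left_mono) auto
  then show ?thesis
    using assms(3,4) by simp
qed

lemma mean_le_sqrt_mean_sq:
  fixes p d :: "'a \<Rightarrow> real"
  assumes "sum p I = 1" "\<And>i. i \<in> I \<Longrightarrow> p i \<ge> 0"
  shows "(\<Sum>i\<in>I. p i * d i) \<le> sqrt (\<Sum>i\<in>I. p i * (d i)\<^sup>2)"
proof -
  have "finite I"
    using assms(1) by (metis sum.infinite zero_neq_one)
  moreover have "I \<noteq> {}"
    using assms(1) by auto
  ultimately have "(\<Sum>i\<in>I. p i *\<^sub>R d i)\<^sup>2 \<le> (\<Sum>i\<in>I. p i * (d i)\<^sup>2)"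
    using assms by (intro convex_on_sum[OF _ _ convex_power2]) auto
  then show ?thesis
    by (simp add: real_le_rsqrt)
qed

lemma norm_diff_sq_unit:
  fixes x y :: "'a::real_inner"
  assumes "norm x = 1" "norm y = 1"
  shows "(norm (x - y))\<^sup>2 = 2 - 2 * (x \<bullet> y)"
  using dot_norm_neg[of x y] assms by simp

lemma attn_mean_dist_le:
  assumes "finite I" "m \<in> I" "\<tau> > 0" "\<beta> = 1 / \<tau>"
    and unit: "\<And>i. i \<in> I \<Longrightarrow> norm (K i) = 1" "norm z = 1"
  shows "(\<Sum>i\<in>I. attn_weight \<beta> K I z i * norm (K i - z))
           \<le> norm (K m - z) + sqrt (2 * \<tau> * ln (card I))"
proof -
  let ?p = "attn_weight \<beta> K I z"
  let ?d = "\<lambda>i. norm (K i - z)"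
  define gap where "gap i = K m \<bullet> z - K i \<bullet> z" for i
  have I: "I \<noteq> {}" using assms(2) by auto
  have "(\<Sum>i\<in>I. ?p i * (?d i)\<^sup>2) = (\<Sum>i\<in>I. ?p i * ((?d m)\<^sup>2 + 2 * gap i))"
    using unit assms(2) by (intro sum.cong) (simp_all add: norm_diff_sq_unit gap_def)
  also have "\<dots> = (?d m)\<^sup>2 * (\<Sum>i\<in>I. ?p i) + 2 * (\<Sum>i\<in>I. ?p i * gap i)"
    by (simp add: distrib_left sum.distrib sum_distrib_left sum_distrib_right mult_ac)
  also have "\<dots> \<le> (?d m)\<^sup>2 + 2 * \<tau> * ln (card I)"
    using sum_attn_weight[OF assms(1) I, of \<beta> K z] attn_score_gap_le[OF assms(1-4), of K z]
    by (simp add: gap_def)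
  finally have second_moment: "(\<Sum>i\<in>I. ?p i * (?d i)\<^sup>2) \<le> (?d m)\<^sup>2 + 2 * \<tau> * ln (card I)" .
  have "card I \<ge> 1"
    using assms(1) I by (simp add: Suc_le_eq card_gt_0_iff)
  then have ln_card: "ln (card I) \<ge> 0"
    by simp
  have "(\<Sum>i\<in>I. ?p i * ?d i) \<le> sqrt (\<Sum>i\<in>I. ?p i * (?d i)\<^sup>2)"
    by (rule mean_le_sqrt_mean_sq)
      (simp_all add: sum_attn_weight[OF assms(1) I] attn_weight_nonneg)
  also have "\<dots> \<le> sqrt ((?d m)\<^sup>2 + 2 * \<tau> * ln (card I))"
    using second_moment by simp
  also have "\<dots> \<le> sqrt ((?d m)\<^sup>2) + sqrt (2 * \<tau> * ln (card I))"
    using assms(3) ln_card by (intro sqrt_add_le_add_sqrt) auto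
  finally show ?thesis
    by simp
qed

lemma norm_diff_unit_le_if_inner_ge:
  fixes x y z :: "'a::real_inner"
  assumes "norm x = 1" "norm y = 1" "norm z = 1" "y \<bullet> z \<le> x \<bullet> z"
  shows "norm (x - z) \<le> norm (y - z)"
proof -
  have "(norm (x - z))\<^sup>2 \<le> (norm (y - z))\<^sup>2"
    using assms(4) norm_diff_sq_unit[OF assms(1,3)] norm_diff_sq_unit[OF assms(2,3)] by linarith
  then show ?thesis
    by (rule power2_le_imp_le) simp
qed

lemma top_scores_contain_nearest:
  assumes "finite I" "S \<subseteq> I" "S \<noteq> {}"
    and top: "\<forall>i\<in>S. \<forall>j\<in>I - S. K j \<bullet> z \<le> K i \<bullet> z"
    and unit: "\<forall>i\<in>I. norm (K i) = 1" "norm z = 1"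
  obtains m where "m \<in> S" "norm (K m - z) \<le> Min ((\<lambda>i. norm (K i - z)) ` I)"
proof -
  have "Min ((\<lambda>i. norm (K i - z)) ` I) \<in> (\<lambda>i. norm (K i - z)) ` I"
    using assms(1-3) by (intro Min_in) auto
  then obtain j where j: "j \<in> I" and jmin: "Min ((\<lambda>i. norm (K i - z)) ` I) = norm (K j - z)"
    by auto
  show ?thesis
  proof (cases "j \<in> S")
    case True
    then show ?thesis using that jmin by simp
  next
    case False
    obtain m where m: "m \<in> S" using assms(3) by blast
    then have "norm (K m - z) \<le> norm (K j - z)"
      using False j top unit assms(2) by (intro norm_diff_unit_le_if_inner_ge) auto
    then show ?thesis using that m jmin by simp
  qed
qed

lemma drift_est_error_le_top_scores:
  assumes "finite I" "S \<subseteq> I" "S \<noteq> {}" "\<tau> > 0" "\<beta> = 1 / \<tau>" "L \<ge> 0"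
    and lip: "\<And>i. i \<in> S \<Longrightarrow> norm (\<delta> (K i) - \<delta> z) \<le> L * norm (K i - z)"
    and top: "\<forall>i\<in>S. \<forall>j\<in>I - S. K j \<bullet> z \<le> K i \<bullet> z"
    and unit: "\<forall>i\<in>I. norm (K i) = 1" "norm z = 1"
  shows "norm (drift_est \<beta> K S \<delta> z - \<delta> z)
           \<le> L * (Min ((\<lambda>i. norm (K i - z)) ` I) + sqrt (2 * \<tau> * ln (card S)))"
proof -
  have S: "finite S" using assms(1,2) finite_subset by blast
  obtain m where m: "m \<in> S" and near: "norm (K m - z) \<le> Min ((\<lambda>i. norm (K i - z)) ` I)"
    using top_scores_contain_nearest[OF assms(1-3) top unit] .
  have "norm (drift_est \<beta> K S \<delta> z - \<delta> z)
          \<le> L * (\<Sum>i\<in>S. attn_weight \<beta> K S z i * norm (K i - z))"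
    using drift_est_error_le[OF S assms(3) lip] .
  also have "\<dots> \<le> L * (norm (K m - z) + sqrt (2 * \<tau> * ln (card S)))"
    using attn_mean_dist_le[OF S m assms(4,5)] unit assms(2,6)
    by (intro mult_left_mono) auto
  also have "\<dots> \<le> L * (Min ((\<lambda>i. norm (K i - z)) ` I) + sqrt (2 * \<tau> * ln (card S)))"
    using near assms(6) by (intro mult_left_mono) auto
  finally show ?thesis .
qed

theorem proposition3p6:
  fixes K :: "nat \<Rightarrow> real^'d" and \<delta> :: "real^'d \<Rightarrow> real^'d" and z :: "real^'d"
    and N :: nat and \<tau> \<beta> L :: real
  assumes N: "N \<ge> 1"
    and tau: "\<tau> > 0" and beta: "\<beta> = 1 / \<tau>"
    and L: "L \<ge> 0"
    and lip: "\<And>i. i \<in> {1..N} \<Longrightarrow> norm (\<delta> (K i) - \<delta> z) \<le> L * norm (K i - z)"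
  shows "norm (drift_est \<beta> K {1..N} \<delta> z - \<delta> z)
           \<le> L * (\<Sum>i\<in>{1..N}. attn_weight \<beta> K {1..N} z i * norm (K i - z))
    \<and> ((\<forall>i\<in>{1..N}. norm (K i) = 1) \<and> norm z = 1 \<longrightarrow>
           norm (drift_est \<beta> K {1..N} \<delta> z - \<delta> z)
             \<le> L * (Min ((\<lambda>i. norm (K i - z)) ` {1..N}) + sqrt (2 * \<tau> * ln (real N))))
    \<and> (\<forall>S k. S \<subseteq> {1..N} \<and> card S = k \<and> k \<ge> 1
              \<and> (\<forall>i\<in>S. \<forall>j\<in>{1..N} - S. K j \<bullet> z \<le> K i \<bullet> z)
              \<and> (\<forall>i\<in>{1..N}. norm (K i) = 1) \<and> norm z = 1 \<longrightarrow>
           norm (drift_est \<beta> K S \<delta> z - \<delta> z)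
             \<le> L * (Min ((\<lambda>i. norm (K i - z)) ` {1..N}) + sqrt (2 * \<tau> * ln (real k))))"
proof (intro conjI impI allI; (elim conjE)?)
  have fin: "finite {1..N}" and ne: "{1..N} \<noteq> {}" using N by auto
  show "norm (drift_est \<beta> K {1..N} \<delta> z - \<delta> z)
          \<le> L * (\<Sum>i\<in>{1..N}. attn_weight \<beta> K {1..N} z i * norm (K i - z))"
    using drift_est_error_le[OF fin ne lip] .
  show "norm (drift_est \<beta> K {1..N} \<delta> z - \<delta> z)
          \<le> L * (Min ((\<lambda>i. norm (K i - z)) ` {1..N}) + sqrt (2 * \<tau> * ln (real N)))"
    if "\<forall>i\<in>{1..N}. norm (K i) = 1" "norm z = 1"
    using drift_est_error_le_top_scores[OF fin order_refl ne tau beta L lip _ that] by simp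
  fix S k
  assume sub: "S \<subseteq> {1..N}" and card: "card S = k" "k \<ge> 1"
    and top: "\<forall>i\<in>S. \<forall>j\<in>{1..N} - S. K j \<bullet> z \<le> K i \<bullet> z"
    and unit: "\<forall>i\<in>{1..N}. norm (K i) = 1" "norm z = 1"
  have "S \<noteq> {}" using card by auto
  moreover have "\<And>i. i \<in> S \<Longrightarrow> norm (\<delta> (K i) - \<delta> z) \<le> L * norm (K i - z)"
    using sub lip by blast
  ultimately show "norm (drift_est \<beta> K S \<delta> z - \<delta> z)
               \<le> L * (Min ((\<lambda>i. norm (K i - z)) ` {1..N}) + sqrt (2 * \<tau> * ln (real k)))"
    using drift_est_error_le_top_scores[OF fin sub _ tau beta L _ top unit] card(1) by simp
qed

end
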